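(* Let $N$ be a nonnegative integer and let $f,a_1,d_1,d_2\in\mathbb{C}$ be such that every hypergeometric series below is well defined (no lower parameter is a nonpositive integer) and all denominators in the definitions of $h$ and $k$ below are nonzero. Put $$h=\frac{(\frac f2+\frac12)(f-1-d_1-d_2+N)(\frac32-\frac f2)}{(\frac f2+\frac12)(\frac f2-\frac32)-a_1(2f-2-d_1-d_2-a_1+N)},\qquad k=\frac{h(1+d_1+a_1-f)(1+d_2+a_1-f)}{d_1d_2-h(1+d_1+d_2+a_1-f)}.$$ Then $$ {}_{7}F_{6}\left[\begin{matrix} f-1,\ \frac f2+\frac32,\ a_1,\ d_1,\ d_2,\ 2f-2-d_1-d_2-a_1+N,\ -N\\ \frac f2-\frac32,\ f-a_1,\ f-d_1,\ f-d_2,\ 2+a_1+d_1+d_2-f-N,\ f+N\end{matrix};1\right]$$ $$=\frac{(f)_N\,(f-d_1-d_2)_N\,(f-a_1-d_1-1)_N\,(f-a_1-d_2-1)_N}{(f-d_1)_N\,(f-d_2)_N\,(f-a_1)_N\,(f-a_1-d_1-d_2-1)_N}\cdot\frac{(k+1)_N}{(k)_N}.$$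
   Context: $(x)_n$ denotes the Pochhammer symbol: $(x)_0=1$, $(x)_n=x(x+1)\cdots(x+n-1)$ for $n\ge1$. The generalized hypergeometric function is $${}_{r+1}F_{r}\left[\begin{matrix} a_1,\dots,a_{r+1}\\ b_1,\dots,b_r\end{matrix};z\right]=\sum_{n=0}^{\infty}\frac{(a_1)_n\cdots(a_{r+1})_n}{(b_1)_n\cdots(b_r)_n\,n!}z^n ,$$ where no $b_i$ is a nonpositive integer; when one upper parameter equals $-N$ with $N$ a nonnegative integer the series terminates. *)

theory Defs
  imports "HOL-Analysis.Analysis"
begin

text \<open>When an upper parameter is a nonpositive integer
  the terms vanish eventually and the series terminates.\<close>
definition hypergeom :: "complex list \<Rightarrow> complex list \<Rightarrow> complex \<Rightarrow> complex" where
  "hypergeom as bs z =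
     (\<Sum>n. (\<Prod>a\<leftarrow>as. pochhammer a n) / ((\<Prod>b\<leftarrow>bs. pochhammer b n) * fact n) * z ^ n)"

end

theory Submission
  imports Defs
begin

text \<open>
  The series is not very-well-poised: its numerator parameter \<open>f/2 + 3/2\<close> sits over \<open>f/2 - 3/2\<close>
  instead of \<open>f/2 + 1/2\<close> over \<open>f/2 - 1/2\<close>. With \<open>u = (f - 1)/2\<close> the discrepancy is the
  factor \<open>(u - 1 + n)(u + 1 + n)\<close> in the \<open>n\<close>-th term, a monic quadratic in \<open>n\<close> with linear
  coefficient \<open>2u\<close>. So are \<open>(a\<^sub>1 + n)(2u - a\<^sub>1 + n)\<close> and \<open>(d\<^sub>1 + n)(2u - d\<^sub>1 + n)\<close>, hence
  the former is an affine combination of the latter two, and this splits every term into a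
  combination of terms of two very-well-poised balanced \<open>\<^sub>7F\<^sub>6\<close> series (with \<open>a\<^sub>1\<close>, respectively
  \<open>d\<^sub>1\<close>, raised by one). Both are summed by Dougall's theorem, proved here by a WZ-style
  telescoping recurrence in \<open>N\<close>, and the two closed forms recombine into the stated product
  with its factor \<open>(k + N)/k = (k + 1)\<^sub>N/(k)\<^sub>N\<close>.

  Dougall's theorem needs its parameters to avoid certain integer values; this genericity is
  removed by continuity: both sides are continuous along the line
  \<open>(f + t, a\<^sub>1 + 3t, d\<^sub>1 + 5t, d\<^sub>2 + 11t)\<close>, agree for all but countably many real \<open>t\<close>,
  and hence agree at \<open>t = 0\<close>.
\<close>

lemma nonzero_if_Ints_diff:
  fixes x y :: complex
  assumes "x \<notin> \<int>" "y - x \<in> \<int>"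
  shows "y \<noteq> 0"
proof
  assume "y = 0"
  then have "x = - (y - x)" by simp
  with assms show False by (metis Ints_minus)
qed

lemma pochhammer_nonzero_if_Ints_diff:
  fixes x y :: complex
  assumes "x \<notin> \<int>" "y - x \<in> \<int>"
  shows "pochhammer y n \<noteq> 0"
proof -
  have "y + of_nat k \<noteq> 0" for k
  proof (rule nonzero_if_Ints_diff[OF assms(1)])
    show "y + of_nat k - x \<in> \<int>"
      using assms(2) by (metis Ints_add Ints_of_nat add_diff_eq diff_add_eq)
  qed
  then show ?thesis
    by (auto simp: pochhammer_eq_0_iff) (metis add.commute add.inverse_neutral add_eq_0_iff)
qed

lemma pochhammer_shift: "pochhammer (x + 1) n * x = pochhammer x n * (x + of_nat n)"
  for x :: "'a :: comm_semiring_1"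
  by (metis pochhammer_rec pochhammer_Suc mult.commute)

lemma pochhammer_add_one:
  fixes x :: "'a :: field"
  assumes "x \<noteq> 0"
  shows "pochhammer (x + 1) n = pochhammer x n * (x + of_nat n) / x"
  using pochhammer_shift[of x n] assms by (simp add: field_simps)

lemma pochhammer_eq_add_one:
  fixes x :: "'a :: field"
  assumes "x + of_nat n \<noteq> 0"
  shows "pochhammer x n = pochhammer (x + 1) n * x / (x + of_nat n)"
  using pochhammer_shift[of x n] assms by (simp add: field_simps)

section \<open>Dougall's summation\<close>

text \<open>The terminating parameter \<open>-N\<close> is written \<open>-M\<close> with \<open>M\<close> complex, so that the
  recurrence in \<open>N\<close> can shift it by one inside rational identities.\<close>

definition dougall_term :: "complex \<Rightarrow> complex \<Rightarrow> complex \<Rightarrow> complex \<Rightarrow> complex \<Rightarrow> nat \<Rightarrow> complex" where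
  "dougall_term a b c d M n =
     pochhammer a n * pochhammer (1 + a/2) n * pochhammer b n * pochhammer c n * pochhammer d n
       * pochhammer (1 + 2*a - b - c - d + M) n * pochhammer (- M) n
     / (fact n * pochhammer (a/2) n * pochhammer (1 + a - b) n * pochhammer (1 + a - c) n
       * pochhammer (1 + a - d) n * pochhammer (b + c + d - a - M) n * pochhammer (1 + a + M) n)"

definition dougall_closed_form :: "complex \<Rightarrow> complex \<Rightarrow> complex \<Rightarrow> complex \<Rightarrow> nat \<Rightarrow> complex" where
  "dougall_closed_form a b c d N =
     pochhammer (1 + a) N * pochhammer (1 + a - b - c) N * pochhammer (1 + a - b - d) N
       * pochhammer (1 + a - c - d) N
     / (pochhammer (1 + a - b) N * pochhammer (1 + a - c) N * pochhammer (1 + a - d) N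
       * pochhammer (1 + a - b - c - d) N)"

definition dougall_generic :: "complex \<Rightarrow> complex \<Rightarrow> complex \<Rightarrow> complex \<Rightarrow> bool" where
  "dougall_generic a b c d \<longleftrightarrow>
     a \<notin> \<int> \<and> a/2 \<notin> \<int> \<and> a - b \<notin> \<int> \<and> a - c \<notin> \<int> \<and> a - d \<notin> \<int> \<and> b + c + d - a \<notin> \<int>
     \<and> a - b - c - d \<notin> \<int> \<and> 2*a - b - c - d \<notin> \<int> \<and> b \<notin> \<int> \<and> c \<notin> \<int> \<and> d \<notin> \<int>"

lemma dougall_term_eq_0: "N < n \<Longrightarrow> dougall_term a b c d (of_nat N) n = 0"
  unfolding dougall_term_def by (auto simp: pochhammer_eq_0_iff)

lemma dougall_term_Suc:
  fixes a b c d M :: complex and n :: nat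
  defines "x \<equiv> of_nat n :: complex"
  assumes "pochhammer (a/2) n \<noteq> 0" "pochhammer (1 + a - b) n \<noteq> 0" "pochhammer (1 + a - c) n \<noteq> 0"
    "pochhammer (1 + a - d) n \<noteq> 0" "pochhammer (b + c + d - a - M) n \<noteq> 0" "pochhammer (1 + a + M) n \<noteq> 0"
    "a/2 + x \<noteq> 0" "1 + a - b + x \<noteq> 0" "1 + a - c + x \<noteq> 0" "1 + a - d + x \<noteq> 0"
    "b + c + d - a - M + x \<noteq> 0" "1 + a + M + x \<noteq> 0"
  shows "dougall_term a b c d M (Suc n) = dougall_term a b c d M n *
     ((a + x) * (1 + a/2 + x) * (b + x) * (c + x) * (d + x) * (1 + 2*a - b - c - d + M + x) * (- M + x)
      / ((x + 1) * (a/2 + x) * (1 + a - b + x) * (1 + a - c + x) * (1 + a - d + x)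
         * (b + c + d - a - M + x) * (1 + a + M + x)))"
proof -
  have "x + 1 \<noteq> 0"
    unfolding x_def by (metis of_nat_Suc of_nat_eq_0_iff add.commute nat.simps(3))
  then show ?thesis
    unfolding dougall_term_def pochhammer_rec' fact_Suc
    using assms by (simp add: x_def divide_simps ac_simps)
qed

lemma dougall_term_param_Suc:
  fixes a b c d M :: complex and n :: nat
  defines "e \<equiv> 1 + 2*a - b - c - d + M" and "x \<equiv> of_nat n :: complex"
  assumes nz: "e + x \<noteq> 0" "a - e + x \<noteq> 0" "M + 1 \<noteq> 0" "1 + a + M \<noteq> 0" "a - e \<noteq> 0" "1 + a + M + x \<noteq> 0"
    "pochhammer (a/2) n \<noteq> 0" "pochhammer (1 + a - b) n \<noteq> 0" "pochhammer (1 + a - c) n \<noteq> 0"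
    "pochhammer (1 + a - d) n \<noteq> 0" "pochhammer (b + c + d - a - (M + 1)) n \<noteq> 0"
    "pochhammer (1 + a + (M + 1)) n \<noteq> 0"
  shows "dougall_term a b c d M n = dougall_term a b c d (M + 1) n
     * (e / (e + x) * (M + 1 - x) / (M + 1) * (a - e) / (a - e + x) * (1 + a + M + x) / (1 + a + M))"
proof -
  have e: "pochhammer e n = pochhammer (1 + 2*a - b - c - d + (M + 1)) n * e / (e + x)"
    using pochhammer_eq_add_one[of e n] nz(1) by (simp add: e_def x_def add_ac)
  have minus_M: "pochhammer (- M) n = pochhammer (- (M + 1)) n * (M + 1 - x) / (M + 1)"
  proof -
    have "pochhammer (- M) n * (- (M + 1)) = pochhammer (- (M + 1)) n * (- (M + 1) + x)"
      using pochhammer_shift[of "- (M + 1)" n] by (simp add: x_def)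
    then have "pochhammer (- M) n * (M + 1) = pochhammer (- (M + 1)) n * (M + 1 - x)"
      by (simp add: algebra_simps)
    then show ?thesis using nz(3) by (simp add: eq_divide_eq)
  qed
  have a_minus_e: "pochhammer (b + c + d - a - M) n
      = pochhammer (b + c + d - a - (M + 1)) n * (a - e + x) / (a - e)"
    using pochhammer_add_one[of "a - e" n] nz(5) by (simp add: e_def x_def algebra_simps)
  have a_plus_M: "pochhammer (1 + a + M) n
      = pochhammer (1 + a + (M + 1)) n * (1 + a + M) / (1 + a + M + x)"
    using pochhammer_eq_add_one[of "1 + a + M" n] nz(6) by (simp add: x_def add_ac)
  show ?thesis
    unfolding dougall_term_def e_def[symmetric] e minus_M a_minus_e a_plus_M
    using nz by (simp add: field_simps)
qed

definition dougall_P :: "complex \<Rightarrow> complex \<Rightarrow> complex \<Rightarrow> complex \<Rightarrow> complex \<Rightarrow> complex" where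
  "dougall_P a b c d M = (1 + a + M) * (1 + a - b - c + M) * (1 + a - b - d + M) * (1 + a - c - d + M)"

definition dougall_Q :: "complex \<Rightarrow> complex \<Rightarrow> complex \<Rightarrow> complex \<Rightarrow> complex \<Rightarrow> complex" where
  "dougall_Q a b c d M = (1 + a - b + M) * (1 + a - c + M) * (1 + a - d + M) * (1 + a - b - c - d + M)"

lemma dougall_certificate_identity:
  fixes a b c d M x :: complex
  defines "e \<equiv> 1 + 2*a - b - c - d + M"
    and "P \<equiv> dougall_P a b c d M" and "Q \<equiv> dougall_Q a b c d M"
  assumes nz: "e + x \<noteq> 0" "a/2 + x \<noteq> 0" "a - e + x \<noteq> 0" "M + 1 \<noteq> 0" "1 + a + M \<noteq> 0"
  shows "-2 * b * c * d * (M + 1)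
      * (Q - P * (e / (e + x) * (M + 1 - x) / (M + 1) * (a - e) / (a - e + x) * (1 + a + M + x) / (1 + a + M)))
    = (Q - P) * (a - e) * ((a + x) * (b + x) * (c + x) * (d + x) * (x - M - 1) / ((a/2 + x) * (a - e + x))
        - x * (x + a - b) * (x + a - c) * (x + a - d) * (x + 1 + a + M) / ((e + x) * (a/2 + x)))"
proof -
  define u1 u2 u3 u4 u5 where u_defs: "u1 = e + x" "u2 = a - e + x" "u3 = a/2 + x" "u4 = M + 1" "u5 = 1 + a + M"
  have u_nz: "u1 \<noteq> 0" "u2 \<noteq> 0" "u3 \<noteq> 0" "u4 \<noteq> 0" "u5 \<noteq> 0"
    using nz unfolding u_defs by simp_all
  define E where "E = u1 * u2 * u3 * u4 * u5"
  define \<rho> where "\<rho> = e / u1 * (M + 1 - x) / u4 * (a - e) / u2 * (1 + a + M + x) / u5"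
  define X where "X = (a + x) * (b + x) * (c + x) * (d + x) * (x - M - 1) / (u3 * u2)"
  define r where "r = x * (x + a - b) * (x + a - c) * (x + a - d) * (x + 1 + a + M) / (u1 * u3)"
  have \<rho>E: "\<rho> * E = e * (M + 1 - x) * (a - e) * (1 + a + M + x) * u3"
    unfolding \<rho>_def E_def using u_nz by (simp add: field_simps)
  have XE: "X * E = (a + x) * (b + x) * (c + x) * (d + x) * (x - M - 1) * u1 * u4 * u5"
    unfolding X_def E_def using u_nz by (simp add: field_simps)
  have rE: "r * E = x * (x + a - b) * (x + a - c) * (x + a - d) * (x + 1 + a + M) * u2 * u4 * u5"
    unfolding r_def E_def using u_nz by (simp add: field_simps)
  have "-2 * b * c * d * (M + 1) * (Q - P * \<rho>) * E = -2 * b * c * d * (M + 1) * (Q * E - P * (\<rho> * E))"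
    by (simp add: algebra_simps)
  also have "\<dots> = (Q - P) * (a - e) * (X * E - r * E)"
    unfolding \<rho>E XE rE
  proof -
    have "a = 2 * u3 - 2 * x" unfolding u_defs by simp
    then show "-2 * b * c * d * (M + 1) * (Q * E - P * (e * (M + 1 - x) * (a - e) * (1 + a + M + x) * u3))
      = (Q - P) * (a - e) * ((a + x) * (b + x) * (c + x) * (d + x) * (x - M - 1) * u1 * u4 * u5
          - x * (x + a - b) * (x + a - c) * (x + a - d) * (x + 1 + a + M) * u2 * u4 * u5)"
      unfolding E_def u_defs(1,2,4,5) P_def Q_def dougall_P_def dougall_Q_def e_def by algebra
  qed
  also have "\<dots> = (Q - P) * (a - e) * (X - r) * E"
    by (simp add: algebra_simps)
  finally have "-2 * b * c * d * (M + 1) * (Q - P * \<rho>) * E = (Q - P) * (a - e) * (X - r) * E" .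
  moreover have "E \<noteq> 0" using u_nz unfolding E_def by simp
  ultimately have "-2 * b * c * d * (M + 1) * (Q - P * \<rho>) = (Q - P) * (a - e) * (X - r)"
    by (metis mult_right_cancel)
  then show ?thesis
    unfolding \<rho>_def X_def r_def u_defs .
qed

text \<open>Summing \<open>dougall_telescoping\<close> below over \<open>n\<close> kills the right-hand side and leaves
  \<open>Q\<close> times the Dougall sum with parameter \<open>M + 1\<close> equal to \<open>P\<close> times the one with \<open>M\<close>.\<close>

definition dougall_certificate :: "complex \<Rightarrow> complex \<Rightarrow> complex \<Rightarrow> complex \<Rightarrow> complex \<Rightarrow> nat \<Rightarrow> complex" where
  "dougall_certificate a b c d M n =
     (dougall_Q a b c d M - dougall_P a b c d M) * (b + c + d - a - M - 1)
     * (n * (n + a - b) * (n + a - c) * (n + a - d) * (n + 1 + a + M)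
        / ((1 + 2*a - b - c - d + M + n) * (a/2 + n)))
     * dougall_term a b c d (M + 1) n"

lemma dougall_certificate_Suc:
  fixes a b c d M :: complex and n :: nat
  defines "e \<equiv> 1 + 2*a - b - c - d + M" and "x \<equiv> of_nat n :: complex"
  assumes nz: "1 + a - b + x \<noteq> 0" "1 + a - c + x \<noteq> 0" "1 + a - d + x \<noteq> 0"
    "1 + a + (M + 1) + x \<noteq> 0" "e + x + 1 \<noteq> 0" "a/2 + x + 1 \<noteq> 0" "a/2 + x \<noteq> 0"
    "b + c + d - a - (M + 1) + x \<noteq> 0"
    "pochhammer (a/2) n \<noteq> 0" "pochhammer (1 + a - b) n \<noteq> 0" "pochhammer (1 + a - c) n \<noteq> 0"
    "pochhammer (1 + a - d) n \<noteq> 0" "pochhammer (b + c + d - a - (M + 1)) n \<noteq> 0"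
    "pochhammer (1 + a + (M + 1)) n \<noteq> 0"
  shows "dougall_certificate a b c d M (Suc n)
    = (dougall_Q a b c d M - dougall_P a b c d M) * (a - e)
      * ((a + x) * (b + x) * (c + x) * (d + x) * (x - M - 1) / ((a/2 + x) * (a - e + x)))
      * dougall_term a b c d (M + 1) n"
proof -
  define y1 y2 y3 y4 y5 y6 y7 where y_defs: "y1 = x + 1" "y2 = 1 + a - b + x" "y3 = 1 + a - c + x"
    "y4 = 1 + a - d + x" "y5 = 1 + a + (M + 1) + x" "y6 = e + x + 1" "y7 = a/2 + x + 1"
  define z1 z2 where z_defs: "z1 = a/2 + x" "z2 = a - e + x"
  have "x + 1 \<noteq> 0" unfolding x_def by (metis of_nat_Suc of_nat_eq_0_iff add.commute nat.simps(3))
  then have nz_atoms: "y1 \<noteq> 0" "y2 \<noteq> 0" "y3 \<noteq> 0" "y4 \<noteq> 0" "y5 \<noteq> 0" "y6 \<noteq> 0" "y7 \<noteq> 0" "z1 \<noteq> 0" "z2 \<noteq> 0"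
    using nz unfolding y_defs z_defs by (simp_all add: e_def algebra_simps)
  have factors: "1 + a/2 + x = y7" "1 + 2*a - b - c - d + (M + 1) + x = y6" "- (M + 1) + x = x - M - 1"
    "b + c + d - a - (M + 1) + x = z2"
    unfolding y_defs z_defs e_def by (simp_all add: algebra_simps)
  have step: "dougall_term a b c d (M + 1) (Suc n) = dougall_term a b c d (M + 1) n *
     ((a + x) * y7 * (b + x) * (c + x) * (d + x) * y6 * (x - M - 1) / (y1 * z1 * y2 * y3 * y4 * z2 * y5))"
  proof -
    have "dougall_term a b c d (M + 1) (Suc n) = dougall_term a b c d (M + 1) n *
     ((a + x) * (1 + a/2 + x) * (b + x) * (c + x) * (d + x) * (1 + 2*a - b - c - d + (M + 1) + x) * (- (M + 1) + x)
      / ((x + 1) * (a/2 + x) * (1 + a - b + x) * (1 + a - c + x) * (1 + a - d + x)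
         * (b + c + d - a - (M + 1) + x) * (1 + a + (M + 1) + x)))"
      by (rule dougall_term_Suc[of a n b c d "M + 1", folded x_def]) (fact nz)+
    then show ?thesis
      unfolding factors y_defs(1-5)[symmetric] z_defs(1)[symmetric] .
  qed
  have "dougall_certificate a b c d M (Suc n) = (dougall_Q a b c d M - dougall_P a b c d M) * (a - e)
     * (y1 * y2 * y3 * y4 * y5 / (y6 * y7)) * dougall_term a b c d (M + 1) (Suc n)"
  proof -
    have "of_nat (Suc n) = y1" "y1 + a - b = y2" "y1 + a - c = y3" "y1 + a - d = y4" "y1 + 1 + a + M = y5"
      "1 + 2*a - b - c - d + M + y1 = y6" "a/2 + y1 = y7" "b + c + d - a - M - 1 = a - e"
      unfolding y_defs x_def e_def by (simp_all add: algebra_simps)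
    then show ?thesis unfolding dougall_certificate_def by simp
  qed
  also have "\<dots> = (dougall_Q a b c d M - dougall_P a b c d M) * (a - e)
      * ((a + x) * (b + x) * (c + x) * (d + x) * (x - M - 1) / (z1 * z2))
      * dougall_term a b c d (M + 1) n"
  proof -
    have "y1 * y2 * y3 * y4 * y5 / (y6 * y7)
        * ((a + x) * y7 * (b + x) * (c + x) * (d + x) * y6 * (x - M - 1) / (y1 * z1 * y2 * y3 * y4 * z2 * y5))
      = (a + x) * (b + x) * (c + x) * (d + x) * (x - M - 1) / (z1 * z2)"
      using nz_atoms by (simp add: field_simps)
    then show ?thesis unfolding step by (simp only: mult_ac)
  qed
  finally show ?thesis unfolding z_defs .
qed

lemma dougall_generic_nonzero:
  fixes a b c d M x e :: complex
  assumes "dougall_generic a b c d"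
    and M: "M = of_nat N" and x: "x = of_nat n" and e: "e = 1 + 2*a - b - c - d + M"
  shows "e + x \<noteq> 0" "e + x + 1 \<noteq> 0" "a - e + x \<noteq> 0" "a - e \<noteq> 0" "b + c + d - a - (M + 1) + x \<noteq> 0"
    "1 + a + M \<noteq> 0" "1 + a + M + x \<noteq> 0" "1 + a + (M + 1) + x \<noteq> 0" "a/2 + x \<noteq> 0" "a/2 + x + 1 \<noteq> 0"
    "1 + a - b + x \<noteq> 0" "1 + a - c + x \<noteq> 0" "1 + a - d + x \<noteq> 0" "M + 1 \<noteq> 0"
    "pochhammer (a/2) n \<noteq> 0" "pochhammer (1 + a - b) n \<noteq> 0" "pochhammer (1 + a - c) n \<noteq> 0"
    "pochhammer (1 + a - d) n \<noteq> 0" "pochhammer (b + c + d - a - (M + 1)) n \<noteq> 0"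
    "pochhammer (1 + a + (M + 1)) n \<noteq> 0"
proof -
  have G: "a \<notin> \<int>" "a/2 \<notin> \<int>" "a - b \<notin> \<int>" "a - c \<notin> \<int>" "a - d \<notin> \<int>" "b + c + d - a \<notin> \<int>"
    "2*a - b - c - d \<notin> \<int>"
    using assms(1) unfolding dougall_generic_def by auto
  show "e + x \<noteq> 0" "e + x + 1 \<noteq> 0"
    by (rule nonzero_if_Ints_diff[OF G(7)]; simp add: e M x)+
  show "a - e + x \<noteq> 0" "a - e \<noteq> 0" "b + c + d - a - (M + 1) + x \<noteq> 0"
    by (rule nonzero_if_Ints_diff[OF G(6)]; simp add: e M x)+
  show "1 + a + M \<noteq> 0" "1 + a + M + x \<noteq> 0" "1 + a + (M + 1) + x \<noteq> 0"
    by (rule nonzero_if_Ints_diff[OF G(1)]; simp add: M x)+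
  show "a/2 + x \<noteq> 0" "a/2 + x + 1 \<noteq> 0"
    by (rule nonzero_if_Ints_diff[OF G(2)]; simp add: x)+
  show "1 + a - b + x \<noteq> 0" "1 + a - c + x \<noteq> 0" "1 + a - d + x \<noteq> 0"
    by (rule nonzero_if_Ints_diff[OF G(3)] nonzero_if_Ints_diff[OF G(4)] nonzero_if_Ints_diff[OF G(5)];
        simp add: x)+
  show "M + 1 \<noteq> 0" unfolding M by (metis of_nat_Suc of_nat_eq_0_iff add.commute nat.simps(3))
  show "pochhammer (a/2) n \<noteq> 0" "pochhammer (1 + a - b) n \<noteq> 0" "pochhammer (1 + a - c) n \<noteq> 0"
    "pochhammer (1 + a - d) n \<noteq> 0" "pochhammer (b + c + d - a - (M + 1)) n \<noteq> 0"
    "pochhammer (1 + a + (M + 1)) n \<noteq> 0"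
    by (rule pochhammer_nonzero_if_Ints_diff[OF G(2)] pochhammer_nonzero_if_Ints_diff[OF G(3)]
        pochhammer_nonzero_if_Ints_diff[OF G(4)] pochhammer_nonzero_if_Ints_diff[OF G(5)]
        pochhammer_nonzero_if_Ints_diff[OF G(6)] pochhammer_nonzero_if_Ints_diff[OF G(1)];
        simp add: M)+
qed

lemma dougall_telescoping:
  fixes a b c d :: complex and N n :: nat
  defines "M \<equiv> of_nat N :: complex"
  assumes "dougall_generic a b c d"
  shows "-2 * b * c * d * (M + 1) * (dougall_Q a b c d M * dougall_term a b c d (M + 1) n
           - dougall_P a b c d M * dougall_term a b c d M n)
       = dougall_certificate a b c d M (Suc n) - dougall_certificate a b c d M n"
proof -
  define e where "e = 1 + 2*a - b - c - d + M"
  define x where "x = (of_nat n :: complex)"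
  note nz = dougall_generic_nonzero[OF assms(2) meta_eq_to_obj_eq[OF M_def] x_def e_def]
  define \<rho> where "\<rho> = e / (e + x) * (M + 1 - x) / (M + 1) * (a - e) / (a - e + x) * (1 + a + M + x) / (1 + a + M)"
  define X where "X = (a + x) * (b + x) * (c + x) * (d + x) * (x - M - 1) / ((a/2 + x) * (a - e + x))"
  define r where "r = x * (x + a - b) * (x + a - c) * (x + a - d) * (x + 1 + a + M) / ((e + x) * (a/2 + x))"
  define C where "C = (dougall_Q a b c d M - dougall_P a b c d M) * (a - e)"
  have down: "dougall_term a b c d M n = dougall_term a b c d (M + 1) n * \<rho>"
    unfolding \<rho>_def by (rule dougall_term_param_Suc[of a b c d M n, folded e_def x_def]) (fact nz)+
  have up: "dougall_certificate a b c d M (Suc n) = C * X * dougall_term a b c d (M + 1) n"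
    unfolding C_def X_def by (rule dougall_certificate_Suc[of a b n c d M, folded e_def x_def]) (fact nz)+
  have here: "dougall_certificate a b c d M n = C * r * dougall_term a b c d (M + 1) n"
  proof -
    have "b + c + d - a - M - 1 = a - e" by (simp add: e_def)
    then show ?thesis
      unfolding dougall_certificate_def C_def r_def x_def[symmetric] e_def[symmetric] by (simp only:)
  qed
  have "-2 * b * c * d * (M + 1) * (dougall_Q a b c d M - dougall_P a b c d M * \<rho>) = C * (X - r)"
    unfolding \<rho>_def C_def X_def r_def
    by (rule dougall_certificate_identity[of a b c d M x, folded e_def]) (fact nz)+
  then have "-2 * b * c * d * (M + 1) * (dougall_Q a b c d M - dougall_P a b c d M * \<rho>)
      * dougall_term a b c d (M + 1) n = C * (X - r) * dougall_term a b c d (M + 1) n"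
    by simp
  then show ?thesis
    unfolding down up here by (simp add: algebra_simps)
qed

lemma dougall_closed_form_Suc:
  fixes a b c d :: complex
  assumes "pochhammer (1 + a - b) N \<noteq> 0" "pochhammer (1 + a - c) N \<noteq> 0" "pochhammer (1 + a - d) N \<noteq> 0"
    "pochhammer (1 + a - b - c - d) N \<noteq> 0" "dougall_Q a b c d (of_nat N) \<noteq> 0"
  shows "dougall_closed_form a b c d (Suc N)
    = dougall_closed_form a b c d N * dougall_P a b c d (of_nat N) / dougall_Q a b c d (of_nat N)"
  using assms unfolding dougall_closed_form_def dougall_P_def dougall_Q_def pochhammer_Suc
  by (simp add: divide_simps ac_simps)

theorem dougall_summation:
  fixes a b c d :: complex
  assumes gen: "dougall_generic a b c d"
  shows "(\<Sum>n<Suc N. dougall_term a b c d (of_nat N) n) = dougall_closed_form a b c d N"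
proof (induction N)
  case 0
  then show ?case by (simp add: dougall_term_def dougall_closed_form_def)
next
  case (Suc N)
  define M :: complex where "M = of_nat N"
  define W where "W = -2 * b * c * d * (M + 1)"
  have G: "a - b \<notin> \<int>" "a - c \<notin> \<int>" "a - d \<notin> \<int>" "a - b - c - d \<notin> \<int>" "b \<notin> \<int>" "c \<notin> \<int>" "d \<notin> \<int>"
    using gen unfolding dougall_generic_def by auto
  have "(\<Sum>n<Suc (Suc N). W * (dougall_Q a b c d M * dougall_term a b c d (M + 1) n
          - dougall_P a b c d M * dougall_term a b c d M n))
      = dougall_certificate a b c d M (Suc (Suc N)) - dougall_certificate a b c d M 0"
    unfolding W_def M_def dougall_telescoping[OF gen] by (rule sum_lessThan_telescope)
  also have "\<dots> = 0"
  proof -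
    have "dougall_term a b c d (M + 1) (Suc (Suc N)) = 0"
      using dougall_term_eq_0[of "Suc N" "Suc (Suc N)" a b c d] by (simp add: M_def add.commute)
    then show ?thesis by (simp add: dougall_certificate_def)
  qed
  finally have "W * dougall_Q a b c d M * (\<Sum>n<Suc (Suc N). dougall_term a b c d (M + 1) n)
      = W * dougall_P a b c d M * (\<Sum>n<Suc (Suc N). dougall_term a b c d M n)"
    by (simp add: sum_subtractf sum_distrib_left algebra_simps)
  also have "(\<Sum>n<Suc (Suc N). dougall_term a b c d M n) = dougall_closed_form a b c d N"
    using Suc.IH dougall_term_eq_0[of N "Suc N" a b c d] by (simp add: M_def)
  finally have sum: "W * dougall_Q a b c d M * (\<Sum>n<Suc (Suc N). dougall_term a b c d (M + 1) n)
      = W * dougall_P a b c d M * dougall_closed_form a b c d N" .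
  have "M + 1 \<noteq> 0" unfolding M_def by (metis of_nat_Suc of_nat_eq_0_iff add.commute nat.simps(3))
  moreover have "b \<noteq> 0" "c \<noteq> 0" "d \<noteq> 0"
    by (rule nonzero_if_Ints_diff[OF G(5)] nonzero_if_Ints_diff[OF G(6)] nonzero_if_Ints_diff[OF G(7)]; simp)+
  ultimately have "W \<noteq> 0" unfolding W_def by simp
  have "1 + a - b + M \<noteq> 0" "1 + a - c + M \<noteq> 0" "1 + a - d + M \<noteq> 0" "1 + a - b - c - d + M \<noteq> 0"
    by (rule nonzero_if_Ints_diff[OF G(1)] nonzero_if_Ints_diff[OF G(2)] nonzero_if_Ints_diff[OF G(3)]
        nonzero_if_Ints_diff[OF G(4)]; simp add: M_def)+
  then have "dougall_Q a b c d M \<noteq> 0" unfolding dougall_Q_def by simp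
  have "pochhammer (1 + a - b) N \<noteq> 0" "pochhammer (1 + a - c) N \<noteq> 0" "pochhammer (1 + a - d) N \<noteq> 0"
    "pochhammer (1 + a - b - c - d) N \<noteq> 0"
    by (rule pochhammer_nonzero_if_Ints_diff[OF G(1)] pochhammer_nonzero_if_Ints_diff[OF G(2)]
        pochhammer_nonzero_if_Ints_diff[OF G(3)] pochhammer_nonzero_if_Ints_diff[OF G(4)]; simp)+
  with \<open>dougall_Q a b c d M \<noteq> 0\<close> have "dougall_closed_form a b c d (Suc N)
      = dougall_closed_form a b c d N * dougall_P a b c d M / dougall_Q a b c d M"
    unfolding M_def by (intro dougall_closed_form_Suc)
  moreover define S where "S = (\<Sum>n<Suc (Suc N). dougall_term a b c d (M + 1) n)"
  from sum \<open>W \<noteq> 0\<close> \<open>dougall_Q a b c d M \<noteq> 0\<close>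
  have "S = dougall_closed_form a b c d N * dougall_P a b c d M / dougall_Q a b c d M"
    unfolding S_def[symmetric] by (simp add: field_simps)
  moreover have "of_nat (Suc N) = M + 1" by (simp add: M_def)
  ultimately show ?case unfolding S_def by (simp only:)
qed

lemma dougall_generic_of_int_shift:
  assumes "dougall_generic a b c d"
  shows "dougall_generic a (b + of_int i) (c + of_int j) (d + of_int k)"
proof -
  have "a - (b + of_int i) = (a - b) + of_int (- i)" "a - (c + of_int j) = (a - c) + of_int (- j)"
    "a - (d + of_int k) = (a - d) + of_int (- k)"
    "b + of_int i + (c + of_int j) + (d + of_int k) - a = (b + c + d - a) + of_int (i + j + k)"
    "a - (b + of_int i) - (c + of_int j) - (d + of_int k) = (a - b - c - d) + of_int (- i - j - k)"
    "2*a - (b + of_int i) - (c + of_int j) - (d + of_int k) = (2*a - b - c - d) + of_int (- i - j - k)"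
    by (simp_all add: algebra_simps)
  with assms show ?thesis
    unfolding dougall_generic_def by (simp only: add_in_Ints_iff_right Ints_of_int simp_thms)
qed

section \<open>Reduction to two Dougall sums\<close>

definition hypergeom_term :: "complex list \<Rightarrow> complex list \<Rightarrow> nat \<Rightarrow> complex" where
  "hypergeom_term as bs n = (\<Prod>a\<leftarrow>as. pochhammer a n) / ((\<Prod>b\<leftarrow>bs. pochhammer b n) * fact n)"

lemma hypergeom_terminating:
  assumes "- of_nat N \<in> set as"
  shows "hypergeom as bs 1 = (\<Sum>n<Suc N. hypergeom_term as bs n)"
proof -
  have "hypergeom as bs 1 = (\<Sum>n<Suc N. (\<Prod>a\<leftarrow>as. pochhammer a n) / ((\<Prod>b\<leftarrow>bs. pochhammer b n) * fact n) * 1 ^ n)"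
    unfolding hypergeom_def
  proof (rule suminf_finite)
    fix n assume "n \<notin> {..<Suc N}"
    then have "pochhammer (- of_nat N) n = (0::complex)" by (auto simp: pochhammer_eq_0_iff)
    then have "(\<Prod>a\<leftarrow>as. pochhammer a n) = (0::complex)"
      using assms by (force simp: prod_list_zero_iff)
    then show "(\<Prod>a\<leftarrow>as. pochhammer a n) / ((\<Prod>b\<leftarrow>bs. pochhammer b n) * fact n) * 1 ^ n = 0" by simp
  qed simp
  then show ?thesis by (simp add: hypergeom_term_def)
qed

lemma cubic_split:
  fixes u a1 d1 x :: "'a :: field"
  defines "s \<equiv> (u - 1) * (u + 1)" and "A \<equiv> a1 * (2*u - a1)" and "B \<equiv> d1 * (2*u - d1)"
  assumes nz: "u \<noteq> 0" "u + 1 \<noteq> 0" "u - 1 \<noteq> 0" "a1 \<noteq> 0" "d1 \<noteq> 0" "2*u - a1 \<noteq> 0" "2*u - d1 \<noteq> 0" "B - A \<noteq> 0"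
  shows "(u + x) * (u + 1 + x) * (u - 1 + x) / (u * (u + 1) * (u - 1))
    = A * (B - s) / (s * (B - A)) * ((u + x) / u * (a1 + x) / a1 * (2*u - a1 + x) / (2*u - a1))
      + B * (s - A) / (s * (B - A)) * ((u + x) / u * (d1 + x) / d1 * (2*u - d1 + x) / (2*u - d1))"
proof -
  define p1 p2 D where "p1 = 2*u - a1" and "p2 = 2*u - d1" and "D = B - A"
  have "s \<noteq> 0" "p1 \<noteq> 0" "p2 \<noteq> 0" "D \<noteq> 0"
    using nz unfolding s_def p1_def p2_def D_def by simp_all
  have "A * (B - s) / (s * D) * ((u + x) / u * (a1 + x) / a1 * (p1 + x) / p1)
      + B * (s - A) / (s * D) * ((u + x) / u * (d1 + x) / d1 * (p2 + x) / p2)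
    = (u + x) / u * ((B - s) * ((a1 + x) * (p1 + x)) + (s - A) * ((d1 + x) * (p2 + x))) / (s * D)"
    using nz \<open>s \<noteq> 0\<close> \<open>p1 \<noteq> 0\<close> \<open>p2 \<noteq> 0\<close> \<open>D \<noteq> 0\<close>
    unfolding A_def B_def p1_def[symmetric] p2_def[symmetric] by (simp add: field_simps)
  also have "(B - s) * ((a1 + x) * (p1 + x)) + (s - A) * ((d1 + x) * (p2 + x)) = D * ((u - 1 + x) * (u + 1 + x))"
    unfolding A_def B_def s_def p1_def p2_def D_def by algebra
  also have "(u + x) / u * (D * ((u - 1 + x) * (u + 1 + x))) / (s * D)
      = (u + x) * (u + 1 + x) * (u - 1 + x) / (u * s)"
    using \<open>D \<noteq> 0\<close> \<open>s \<noteq> 0\<close> nz(1) by (simp add: field_simps)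
  also have "u * s = u * (u + 1) * (u - 1)"
    unfolding s_def by (simp add: algebra_simps)
  finally show ?thesis unfolding p1_def p2_def D_def by simp
qed

definition generic_parameters :: "complex \<Rightarrow> complex \<Rightarrow> complex \<Rightarrow> complex \<Rightarrow> bool" where
  "generic_parameters f a1 d1 d2 \<longleftrightarrow> dougall_generic (f - 1) a1 d1 d2
     \<and> d1 - a1 \<notin> \<int> \<and> f - a1 - d1 \<notin> \<int> \<and> f - a1 - d2 \<notin> \<int> \<and> f - d1 - d2 \<notin> \<int>"

lemma hypergeom_term_split:
  fixes f a1 d1 d2 :: complex and N n :: nat
  assumes gen: "generic_parameters f a1 d1 d2"
  defines "u \<equiv> (f - 1) / 2"
  defines "s \<equiv> (u - 1) * (u + 1)" and "A \<equiv> a1 * (2*u - a1)" and "B \<equiv> d1 * (2*u - d1)"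
  shows "hypergeom_term [f - 1, f/2 + 3/2, a1, d1, d2, 2*f - 2 - d1 - d2 - a1 + of_nat N, - of_nat N]
                   [f/2 - 3/2, f - a1, f - d1, f - d2, 2 + a1 + d1 + d2 - f - of_nat N, f + of_nat N] n
    = A * (B - s) / (s * (B - A)) * dougall_term (f - 1) (a1 + 1) d1 d2 (of_nat N) n
      + B * (s - A) / (s * (B - A)) * dougall_term (f - 1) a1 (d1 + 1) d2 (of_nat N) n"
proof -
  define x :: complex where "x = of_nat n"
  have G: "f - 1 \<notin> \<int>" "u \<notin> \<int>" "f - 1 - a1 \<notin> \<int>" "f - 1 - d1 \<notin> \<int>" "f - 1 - d2 \<notin> \<int>"
    "a1 + d1 + d2 - (f - 1) \<notin> \<int>" "a1 \<notin> \<int>" "d1 \<notin> \<int>" "d1 - a1 \<notin> \<int>" "f - a1 - d1 \<notin> \<int>"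
    using gen unfolding generic_parameters_def dougall_generic_def u_def by auto
  have u2: "2 * u = f - 1" unfolding u_def by simp
  have nz_u: "u \<noteq> 0" "u + 1 \<noteq> 0" "u - 1 \<noteq> 0" "u - 1 + x \<noteq> 0"
    by (rule nonzero_if_Ints_diff[OF G(2)]; simp add: x_def)+
  have nz_a1: "a1 \<noteq> 0" "2*u - a1 \<noteq> 0" "2*u - a1 + x \<noteq> 0"
    by (rule nonzero_if_Ints_diff[OF G(7)]; simp)
      (rule nonzero_if_Ints_diff[OF G(3)]; simp add: u2 x_def)+
  have nz_d1: "d1 \<noteq> 0" "2*u - d1 \<noteq> 0" "2*u - d1 + x \<noteq> 0"
    by (rule nonzero_if_Ints_diff[OF G(8)]; simp)
      (rule nonzero_if_Ints_diff[OF G(4)]; simp add: u2 x_def)+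
  note nz = nz_u nz_a1 nz_d1
  have "B - A = (d1 - a1) * (2*u - d1 - a1)" unfolding A_def B_def by (simp add: algebra_simps)
  moreover have "d1 - a1 \<noteq> 0" "2*u - d1 - a1 \<noteq> 0"
    by (rule nonzero_if_Ints_diff[OF G(9)], simp) (rule nonzero_if_Ints_diff[OF G(10)], simp add: u2)
  ultimately have "B - A \<noteq> 0" by simp
  have pz: "pochhammer u n \<noteq> 0" "pochhammer (f - a1) n \<noteq> 0" "pochhammer (f - d1) n \<noteq> 0"
    "pochhammer (f - d2) n \<noteq> 0" "pochhammer (2 + a1 + d1 + d2 - f - of_nat N) n \<noteq> 0"
    "pochhammer (f + of_nat N) n \<noteq> 0"
    by ((rule pochhammer_nonzero_if_Ints_diff[OF G(2)], simp),
        (rule pochhammer_nonzero_if_Ints_diff[OF G(3)], simp),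
        (rule pochhammer_nonzero_if_Ints_diff[OF G(4)], simp),
        (rule pochhammer_nonzero_if_Ints_diff[OF G(5)], simp),
        (rule pochhammer_nonzero_if_Ints_diff[OF G(6)], simp),
        (rule pochhammer_nonzero_if_Ints_diff[OF G(1)], simp))
  define base where "base = pochhammer (f - 1) n * pochhammer a1 n * pochhammer d1 n * pochhammer d2 n
     * pochhammer (2*f - 2 - d1 - d2 - a1 + of_nat N) n * pochhammer (- of_nat N) n
     / (fact n * pochhammer (f - a1) n * pochhammer (f - d1) n * pochhammer (f - d2) n
        * pochhammer (2 + a1 + d1 + d2 - f - of_nat N) n * pochhammer (f + of_nat N) n)"
  have pu1: "pochhammer (u + 1) n = pochhammer u n * (u + x) / u"
    using pochhammer_add_one[OF nz_u(1)] by (simp add: x_def)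
  have summand: "hypergeom_term [f - 1, f/2 + 3/2, a1, d1, d2, 2*f - 2 - d1 - d2 - a1 + of_nat N, - of_nat N]
                   [f/2 - 3/2, f - a1, f - d1, f - d2, 2 + a1 + d1 + d2 - f - of_nat N, f + of_nat N] n
    = base * ((u + x) * (u + 1 + x) * (u - 1 + x) / (u * (u + 1) * (u - 1)))"
  proof -
    define v w z where "v = u + 1" and "w = u - 1" and "z = u - 1 + x"
    have "v \<noteq> 0" "w \<noteq> 0" "z \<noteq> 0" using nz_u unfolding v_def w_def z_def by simp_all
    have params: "f/2 + 3/2 = v + 1" "f/2 - 3/2 = w" by (simp_all add: v_def w_def u_def field_simps)
    have up: "pochhammer (v + 1) n = pochhammer u n * (u + x) / u * (v + x) / v"
      using pochhammer_add_one[OF \<open>v \<noteq> 0\<close>, of n] pu1 by (simp add: x_def v_def)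
    have down: "pochhammer w n = pochhammer u n * w / z"
      using pochhammer_eq_add_one[of w n] \<open>z \<noteq> 0\<close> by (simp add: x_def w_def z_def)
    have "hypergeom_term [f - 1, f/2 + 3/2, a1, d1, d2, 2*f - 2 - d1 - d2 - a1 + of_nat N, - of_nat N]
                   [f/2 - 3/2, f - a1, f - d1, f - d2, 2 + a1 + d1 + d2 - f - of_nat N, f + of_nat N] n
      = base * ((u + x) * (v + x) * z / (u * v * w))"
      unfolding hypergeom_term_def params list.map prod_list.Cons prod_list.Nil up down base_def
      using nz_u(1) \<open>v \<noteq> 0\<close> \<open>w \<noteq> 0\<close> \<open>z \<noteq> 0\<close> pz by (simp add: field_simps)
    then show ?thesis unfolding v_def w_def z_def by (simp add: add_ac)
  qed
  have dougall_shift: "dougall_term (f - 1) (b + 1) c d2 (of_nat N) n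
      = base * ((u + x) / u * (b + x) / b * (2*u - b + x) / (2*u - b))"
    if bc: "b = a1 \<and> c = d1 \<or> b = d1 \<and> c = a1" for b c
  proof -
    define y z where "y = 2*u - b" and "z = 2*u - b + x"
    have "b \<noteq> 0" "y \<noteq> 0" "z \<noteq> 0" "pochhammer (f - b) n \<noteq> 0" "pochhammer (f - c) n \<noteq> 0"
      using bc nz pz unfolding y_def z_def by auto
    have "pochhammer (2 + b + c + d2 - f - of_nat N) n \<noteq> 0"
      using bc pz(5) by (auto simp: algebra_simps)
    have base: "base = pochhammer (f - 1) n * pochhammer b n * pochhammer c n * pochhammer d2 n
       * pochhammer (2*f - 2 - b - c - d2 + of_nat N) n * pochhammer (- of_nat N) n
       / (fact n * pochhammer (f - b) n * pochhammer (f - c) n * pochhammer (f - d2) n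
          * pochhammer (2 + b + c + d2 - f - of_nat N) n * pochhammer (f + of_nat N) n)"
      using bc unfolding base_def by (auto simp: algebra_simps)
    have params: "(f - 1)/2 = u" "1 + (f - 1) - (b + 1) = y"
      "1 + 2 * (f - 1) - (b + 1) - c - d2 + of_nat N = 2*f - 2 - b - c - d2 + of_nat N"
      "1 + (f - 1) - c = f - c" "1 + (f - 1) - d2 = f - d2"
      "b + 1 + c + d2 - (f - 1) - of_nat N = 2 + b + c + d2 - f - of_nat N" "1 + (f - 1) + of_nat N = f + of_nat N"
      by (simp_all add: u_def y_def field_simps)
    have pu1': "pochhammer (1 + u) n = pochhammer u n * (u + x) / u"
      using pu1 by (simp add: add.commute)
    have up: "pochhammer (b + 1) n = pochhammer b n * (b + x) / b"
      using pochhammer_add_one[OF \<open>b \<noteq> 0\<close>] by (simp add: x_def)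
    have "y + 1 = f - b" "y + x = z" unfolding y_def z_def using u2 by (simp_all add: algebra_simps)
    then have down: "pochhammer y n = pochhammer (f - b) n * y / z"
      using pochhammer_eq_add_one[of y n, folded x_def] \<open>z \<noteq> 0\<close> by simp
    have "dougall_term (f - 1) (b + 1) c d2 (of_nat N) n = base * ((u + x) / u * (b + x) / b * z / y)"
      unfolding dougall_term_def params pu1' up down base
      using nz_u(1) \<open>b \<noteq> 0\<close> \<open>y \<noteq> 0\<close> \<open>z \<noteq> 0\<close> pz \<open>pochhammer (f - b) n \<noteq> 0\<close> \<open>pochhammer (f - c) n \<noteq> 0\<close>
        \<open>pochhammer (2 + b + c + d2 - f - of_nat N) n \<noteq> 0\<close>
      by (simp add: field_simps)
    then show ?thesis unfolding y_def z_def .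
  qed
  have "dougall_term (f - 1) a1 (d1 + 1) d2 (of_nat N) n = dougall_term (f - 1) (d1 + 1) a1 d2 (of_nat N) n"
    unfolding dougall_term_def by (simp add: algebra_simps)
  also have "\<dots> = base * ((u + x) / u * (d1 + x) / d1 * (2*u - d1 + x) / (2*u - d1))"
    by (rule dougall_shift) simp
  finally have dougall2: "dougall_term (f - 1) a1 (d1 + 1) d2 (of_nat N) n
    = base * ((u + x) / u * (d1 + x) / d1 * (2*u - d1 + x) / (2*u - d1))" .
  have dougall1: "dougall_term (f - 1) (a1 + 1) d1 d2 (of_nat N) n
    = base * ((u + x) / u * (a1 + x) / a1 * (2*u - a1 + x) / (2*u - a1))"
    by (rule dougall_shift) simp
  show ?thesis
    unfolding summand dougall1 dougall2 s_def A_def B_def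
      cubic_split[OF nz_u(1-3) nz_a1(1) nz_d1(1) nz_a1(2) nz_d1(2) \<open>B - A \<noteq> 0\<close>[unfolded A_def B_def]]
    by (simp only: distrib_left mult_ac)
qed

definition closed_form_prefactor :: "complex \<Rightarrow> complex \<Rightarrow> complex \<Rightarrow> complex \<Rightarrow> nat \<Rightarrow> complex" where
  "closed_form_prefactor f a1 d1 d2 N =
     pochhammer f N * pochhammer (f - d1 - d2) N * pochhammer (f - a1 - d1 - 1) N * pochhammer (f - a1 - d2 - 1) N
     / (pochhammer (f - d1) N * pochhammer (f - d2) N * pochhammer (f - a1) N * pochhammer (f - a1 - d1 - d2 - 1) N)"

lemma dougall_closed_form_shift_first:
  fixes f a1 d1 d2 :: complex
  assumes "f - a1 - 1 \<noteq> 0" "f - a1 - 1 + of_nat N \<noteq> 0" "pochhammer (f - a1) N \<noteq> 0"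
    "pochhammer (f - d1) N \<noteq> 0" "pochhammer (f - d2) N \<noteq> 0" "pochhammer (f - a1 - d1 - d2 - 1) N \<noteq> 0"
  shows "dougall_closed_form (f - 1) (a1 + 1) d1 d2 N
    = closed_form_prefactor f a1 d1 d2 N * ((f - a1 - 1 + of_nat N) / (f - a1 - 1))"
proof -
  define q r where "q = f - a1 - 1" and "r = f - a1 - 1 + of_nat N"
  have "q \<noteq> 0" "r \<noteq> 0" using assms(1,2) unfolding q_def r_def .
  have params: "pochhammer (1 + (f - 1)) N = pochhammer (f) N" "pochhammer (1 + (f - 1) - (a1 + 1) - d1) N = pochhammer (f - a1 - d1 - 1) N"
    "pochhammer (1 + (f - 1) - (a1 + 1) - d2) N = pochhammer (f - a1 - d2 - 1) N" "pochhammer (1 + (f - 1) - d1 - d2) N = pochhammer (f - d1 - d2) N"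
    "pochhammer (1 + (f - 1) - (a1 + 1)) N = pochhammer (q) N" "pochhammer (1 + (f - 1) - d1) N = pochhammer (f - d1) N"
    "pochhammer (1 + (f - 1) - d2) N = pochhammer (f - d2) N" "pochhammer (1 + (f - 1) - (a1 + 1) - d1 - d2) N = pochhammer (f - a1 - d1 - d2 - 1) N"
    unfolding q_def by (simp_all add: algebra_simps)
  have qr: "q + 1 = f - a1" "q + of_nat N = r" unfolding q_def r_def by simp_all
  then have shift: "pochhammer q N = pochhammer (f - a1) N * q / r"
    using pochhammer_eq_add_one[of q N] \<open>r \<noteq> 0\<close> by simp
  show ?thesis
    unfolding dougall_closed_form_def closed_form_prefactor_def params shift q_def[symmetric] qr(2)
    using assms(3-) \<open>q \<noteq> 0\<close> \<open>r \<noteq> 0\<close> by (simp add: field_simps)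
qed

lemma dougall_closed_form_shift_second:
  fixes f a1 d1 d2 :: complex
  assumes "f - a1 - d2 - 1 \<noteq> 0" "f - a1 - d2 - 1 + of_nat N \<noteq> 0" "f - d1 - d2 - 1 \<noteq> 0"
    "f - d1 - d2 - 1 + of_nat N \<noteq> 0" "f - d1 - 1 \<noteq> 0" "f - d1 - 1 + of_nat N \<noteq> 0"
    "pochhammer (f - a1) N \<noteq> 0" "pochhammer (f - d1) N \<noteq> 0" "pochhammer (f - d2) N \<noteq> 0"
    "pochhammer (f - a1 - d1 - d2 - 1) N \<noteq> 0"
  shows "dougall_closed_form (f - 1) a1 (d1 + 1) d2 N
    = closed_form_prefactor f a1 d1 d2 N * ((f - a1 - d2 - 1 + of_nat N) / (f - a1 - d2 - 1)
        * ((f - d1 - d2 - 1) / (f - d1 - d2 - 1 + of_nat N)) * ((f - d1 - 1 + of_nat N) / (f - d1 - 1)))"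
proof -
  define q1 r1 q2 r2 q3 r3 where "q1 = f - a1 - d2 - 1" and "r1 = f - a1 - d2 - 1 + of_nat N"
    and "q2 = f - d1 - d2 - 1" and "r2 = f - d1 - d2 - 1 + of_nat N"
    and "q3 = f - d1 - 1" and "r3 = f - d1 - 1 + of_nat N"
  have nz: "q1 \<noteq> 0" "r1 \<noteq> 0" "q2 \<noteq> 0" "r2 \<noteq> 0" "q3 \<noteq> 0" "r3 \<noteq> 0"
    using assms(1-6) unfolding q1_def r1_def q2_def r2_def q3_def r3_def .
  have params: "pochhammer (1 + (f - 1)) N = pochhammer (f) N" "pochhammer (1 + (f - 1) - a1 - (d1 + 1)) N = pochhammer (f - a1 - d1 - 1) N"
    "pochhammer (1 + (f - 1) - a1 - d2) N = pochhammer (q1 + 1) N" "pochhammer (1 + (f - 1) - (d1 + 1) - d2) N = pochhammer (q2) N"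
    "pochhammer (1 + (f - 1) - a1) N = pochhammer (f - a1) N" "pochhammer (1 + (f - 1) - (d1 + 1)) N = pochhammer (q3) N"
    "pochhammer (1 + (f - 1) - d2) N = pochhammer (f - d2) N" "pochhammer (1 + (f - 1) - a1 - (d1 + 1) - d2) N = pochhammer (f - a1 - d1 - d2 - 1) N"
    unfolding q1_def q2_def q3_def by (simp_all add: algebra_simps)
  have qr: "q1 + of_nat N = r1" "q2 + 1 = f - d1 - d2" "q2 + of_nat N = r2" "q3 + 1 = f - d1" "q3 + of_nat N = r3"
    unfolding q1_def r1_def q2_def r2_def q3_def r3_def by simp_all
  then have shifts: "pochhammer (q1 + 1) N = pochhammer q1 N * r1 / q1"
    "pochhammer q2 N = pochhammer (f - d1 - d2) N * q2 / r2"
    "pochhammer q3 N = pochhammer (f - d1) N * q3 / r3"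
    using pochhammer_add_one[OF nz(1), of N] pochhammer_eq_add_one[of q2 N] pochhammer_eq_add_one[of q3 N]
      nz(4,6) by simp_all
  show ?thesis
    unfolding dougall_closed_form_def closed_form_prefactor_def params shifts
      q1_def[symmetric] q2_def[symmetric] q3_def[symmetric] qr(1,3,5)
    using assms(7-) nz by (simp add: field_simps)
qed

lemma dougall_weights_combination:
  fixes f a1 d1 d2 M h k :: complex
  defines "u \<equiv> (f - 1) / 2"
  defines "s \<equiv> (u - 1) * (u + 1)" and "A \<equiv> a1 * (2*u - a1)" and "B \<equiv> d1 * (2*u - d1)"
  assumes h_def: "h = (f/2 + 1/2) * (f - 1 - d1 - d2 + M) * (3/2 - f/2) /
                  ((f/2 + 1/2) * (f/2 - 3/2) - a1 * (2*f - 2 - d1 - d2 - a1 + M))"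
    and hden: "(f/2 + 1/2) * (f/2 - 3/2) - a1 * (2*f - 2 - d1 - d2 - a1 + M) \<noteq> 0"
    and k_def: "k = h * (1 + d1 + a1 - f) * (1 + d2 + a1 - f) / (d1 * d2 - h * (1 + d1 + d2 + a1 - f))"
    and kden: "d1 * d2 - h * (1 + d1 + d2 + a1 - f) \<noteq> 0" and "k \<noteq> 0"
    and nz: "s \<noteq> 0" "B - A \<noteq> 0" "f - a1 - 1 \<noteq> 0" "f - a1 - d2 - 1 \<noteq> 0" "f - d1 - d2 - 1 + M \<noteq> 0"
      "f - d1 - 1 \<noteq> 0"
  shows "A * (B - s) / (s * (B - A)) * ((f - a1 - 1 + M) / (f - a1 - 1))
       + B * (s - A) / (s * (B - A)) * ((f - a1 - d2 - 1 + M) / (f - a1 - d2 - 1)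
           * ((f - d1 - d2 - 1) / (f - d1 - d2 - 1 + M)) * ((f - d1 - 1 + M) / (f - d1 - 1)))
     = (k + M) / k"
proof -
  define Hn Hd X Y K where "Hn = (u + 1) * (f - 1 - d1 - d2 + M) * (1 - u)"
    and "Hd = (u + 1) * (u - 1) - a1 * (2*f - 2 - d1 - d2 - a1 + M)"
    and "X = (1 + d1 + a1 - f) * (1 + d2 + a1 - f)" and "Y = 1 + d1 + d2 + a1 - f"
    and "K = d1 * d2 * Hd - Hn * Y"
  have halves: "f/2 + 1/2 = u + 1" "3/2 - f/2 = 1 - u" "f/2 - 3/2 = u - 1"
    unfolding u_def by (simp_all add: field_simps)
  have h: "h = Hn / Hd" unfolding h_def halves Hn_def Hd_def ..
  have "Hd \<noteq> 0" using hden unfolding halves Hd_def .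
  have K: "K = Hd * (d1 * d2 - h * Y)"
    unfolding K_def h using \<open>Hd \<noteq> 0\<close> by (simp add: field_simps)
  then have "K \<noteq> 0" using \<open>Hd \<noteq> 0\<close> kden unfolding Y_def by simp
  have "k = h * X / (d1 * d2 - h * Y)" unfolding k_def X_def Y_def by (simp add: mult.assoc)
  also have "d1 * d2 - h * Y = K / Hd" using K \<open>Hd \<noteq> 0\<close> by simp
  also have "h * X / (K / Hd) = Hn * X / K" unfolding h using \<open>Hd \<noteq> 0\<close> \<open>K \<noteq> 0\<close> by simp
  finally have k: "k = Hn * X / K" .
  with \<open>k \<noteq> 0\<close> have "Hn * X \<noteq> 0" by auto
  have rhs: "(k + M) / k = (Hn * X + M * K) / (Hn * X)"
    unfolding k using \<open>K \<noteq> 0\<close> \<open>Hn * X \<noteq> 0\<close> by (simp add: field_simps)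
  define x y w z where "x = A * (B - s) * (f - a1 - 1 + M)" and "y = s * (B - A) * (f - a1 - 1)"
    and "w = B * (s - A) * ((f - a1 - d2 - 1 + M) * (f - d1 - d2 - 1) * (f - d1 - 1 + M))"
    and "z = s * (B - A) * ((f - a1 - d2 - 1) * (f - d1 - d2 - 1 + M) * (f - d1 - 1))"
  have "y \<noteq> 0" "z \<noteq> 0" using nz unfolding y_def z_def by simp_all
  have lhs: "A * (B - s) / (s * (B - A)) * ((f - a1 - 1 + M) / (f - a1 - 1))
       + B * (s - A) / (s * (B - A)) * ((f - a1 - d2 - 1 + M) / (f - a1 - d2 - 1)
           * ((f - d1 - d2 - 1) / (f - d1 - d2 - 1 + M)) * ((f - d1 - 1 + M) / (f - d1 - 1)))
     = (x * z + w * y) / (y * z)"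
    unfolding times_divide_times_eq x_def y_def w_def z_def[symmetric]
    using add_frac_eq[OF \<open>y \<noteq> 0\<close> \<open>z \<noteq> 0\<close>] unfolding x_def y_def w_def .
  have f: "f = 2 * u + 1" unfolding u_def by (simp add: field_simps)
  have "(x * z + w * y) * (Hn * X) = (Hn * X + M * K) * (y * z)"
    unfolding x_def y_def w_def z_def A_def B_def s_def Hn_def Hd_def X_def Y_def K_def f by algebra
  then show ?thesis
    unfolding lhs rhs using \<open>y \<noteq> 0\<close> \<open>z \<noteq> 0\<close> \<open>Hn * X \<noteq> 0\<close> by (simp add: frac_eq_eq)
qed

lemma hypergeom_sum_generic:
  fixes N :: nat and f a1 d1 d2 h k :: complex
  assumes gen: "generic_parameters f a1 d1 d2"
    and h_def: "h = (f/2 + 1/2) * (f - 1 - d1 - d2 + of_nat N) * (3/2 - f/2) /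
                  ((f/2 + 1/2) * (f/2 - 3/2) - a1 * (2*f - 2 - d1 - d2 - a1 + of_nat N))"
    and hden: "(f/2 + 1/2) * (f/2 - 3/2) - a1 * (2*f - 2 - d1 - d2 - a1 + of_nat N) \<noteq> 0"
    and k_def: "k = h * (1 + d1 + a1 - f) * (1 + d2 + a1 - f) / (d1 * d2 - h * (1 + d1 + d2 + a1 - f))"
    and kden: "d1 * d2 - h * (1 + d1 + d2 + a1 - f) \<noteq> 0"
    and "k \<noteq> 0" "pochhammer k N \<noteq> 0"
  shows "(\<Sum>n<Suc N. hypergeom_term [f - 1, f/2 + 3/2, a1, d1, d2, 2*f - 2 - d1 - d2 - a1 + of_nat N, - of_nat N]
                   [f/2 - 3/2, f - a1, f - d1, f - d2, 2 + a1 + d1 + d2 - f - of_nat N, f + of_nat N] n)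
       = closed_form_prefactor f a1 d1 d2 N * (pochhammer (k + 1) N / pochhammer k N)"
proof -
  define u s A B where "u = (f - 1) / 2" and "s = (u - 1) * (u + 1)"
    and "A = a1 * (2*u - a1)" and "B = d1 * (2*u - d1)"
  define \<alpha> \<beta> where "\<alpha> = A * (B - s) / (s * (B - A))" and "\<beta> = B * (s - A) / (s * (B - A))"
  have G: "dougall_generic (f - 1) a1 d1 d2" "u \<notin> \<int>" "f - 1 - a1 \<notin> \<int>" "f - 1 - d1 \<notin> \<int>"
    "f - 1 - d2 \<notin> \<int>" "f - 1 - a1 - d1 - d2 \<notin> \<int>" "d1 - a1 \<notin> \<int>" "f - a1 - d1 \<notin> \<int>"
    "f - a1 - d2 \<notin> \<int>" "f - d1 - d2 \<notin> \<int>"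
    using gen unfolding generic_parameters_def dougall_generic_def u_def by auto
  have nz1: "f - a1 - 1 \<noteq> 0" "f - a1 - 1 + of_nat N \<noteq> 0"
    by (rule nonzero_if_Ints_diff[OF G(3)]; simp)+
  have nz2: "f - a1 - d2 - 1 \<noteq> 0" "f - a1 - d2 - 1 + of_nat N \<noteq> 0"
    by (rule nonzero_if_Ints_diff[OF G(9)]; simp)+
  have nz3: "f - d1 - d2 - 1 \<noteq> 0" "f - d1 - d2 - 1 + of_nat N \<noteq> 0"
    by (rule nonzero_if_Ints_diff[OF G(10)]; simp)+
  have nz4: "f - d1 - 1 \<noteq> 0" "f - d1 - 1 + of_nat N \<noteq> 0"
    by (rule nonzero_if_Ints_diff[OF G(4)]; simp)+
  have pz: "pochhammer (f - a1) N \<noteq> 0" "pochhammer (f - d1) N \<noteq> 0" "pochhammer (f - d2) N \<noteq> 0"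
    "pochhammer (f - a1 - d1 - d2 - 1) N \<noteq> 0"
    by ((rule pochhammer_nonzero_if_Ints_diff[OF G(3)], simp), (rule pochhammer_nonzero_if_Ints_diff[OF G(4)], simp),
        (rule pochhammer_nonzero_if_Ints_diff[OF G(5)], simp), (rule pochhammer_nonzero_if_Ints_diff[OF G(6)], simp))
  have "s \<noteq> 0"
    using nonzero_if_Ints_diff[OF G(2), of "u + 1"] nonzero_if_Ints_diff[OF G(2), of "u - 1"]
    unfolding s_def by simp
  have u2: "2 * u = f - 1" unfolding u_def by simp
  have "B - A = (d1 - a1) * (2*u - d1 - a1)" unfolding A_def B_def by (simp add: algebra_simps)
  moreover have "d1 - a1 \<noteq> 0" "2*u - d1 - a1 \<noteq> 0"
    by (rule nonzero_if_Ints_diff[OF G(7)], simp) (rule nonzero_if_Ints_diff[OF G(8)], simp add: u2)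
  ultimately have "B - A \<noteq> 0" by simp
  have gen': "dougall_generic (f - 1) (a1 + 1) d1 d2" "dougall_generic (f - 1) a1 (d1 + 1) d2"
    using dougall_generic_of_int_shift[OF G(1), of 1 0 0] dougall_generic_of_int_shift[OF G(1), of 0 1 0]
    by simp_all
  have "(\<Sum>n<Suc N. hypergeom_term [f - 1, f/2 + 3/2, a1, d1, d2, 2*f - 2 - d1 - d2 - a1 + of_nat N, - of_nat N]
                   [f/2 - 3/2, f - a1, f - d1, f - d2, 2 + a1 + d1 + d2 - f - of_nat N, f + of_nat N] n)
      = \<alpha> * dougall_closed_form (f - 1) (a1 + 1) d1 d2 N + \<beta> * dougall_closed_form (f - 1) a1 (d1 + 1) d2 N"
    unfolding hypergeom_term_split[OF gen, folded u_def, folded s_def A_def B_def, folded \<alpha>_def \<beta>_def]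
    by (simp only: sum.distrib sum_distrib_left[symmetric] dougall_summation[OF gen'(1)]
        dougall_summation[OF gen'(2)])
  also have "\<dots> = closed_form_prefactor f a1 d1 d2 N * (\<alpha> * ((f - a1 - 1 + of_nat N) / (f - a1 - 1))
      + \<beta> * ((f - a1 - d2 - 1 + of_nat N) / (f - a1 - d2 - 1)
        * ((f - d1 - d2 - 1) / (f - d1 - d2 - 1 + of_nat N)) * ((f - d1 - 1 + of_nat N) / (f - d1 - 1))))"
    unfolding dougall_closed_form_shift_first[OF nz1 pz] dougall_closed_form_shift_second[OF nz2 nz3 nz4 pz]
    by (simp only: distrib_left mult_ac)
  also have "\<alpha> * ((f - a1 - 1 + of_nat N) / (f - a1 - 1))
      + \<beta> * ((f - a1 - d2 - 1 + of_nat N) / (f - a1 - d2 - 1)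
        * ((f - d1 - d2 - 1) / (f - d1 - d2 - 1 + of_nat N)) * ((f - d1 - 1 + of_nat N) / (f - d1 - 1)))
      = (k + of_nat N) / k"
    unfolding \<alpha>_def \<beta>_def
    by (rule dougall_weights_combination[where M = "of_nat N", of h f d1 d2 a1 k, folded u_def, folded s_def A_def B_def])
      (fact h_def hden k_def kden \<open>k \<noteq> 0\<close> \<open>s \<noteq> 0\<close> \<open>B - A \<noteq> 0\<close> nz1(1) nz2(1) nz3(2) nz4(1))+
  also have "(k + of_nat N) / k = pochhammer (k + 1) N / pochhammer k N"
    using pochhammer_add_one[OF \<open>k \<noteq> 0\<close>, of N] \<open>pochhammer k N \<noteq> 0\<close> by simp
  finally show ?thesis .
qed

section \<open>Removing the genericity assumptions\<close>

lemma countable_Ints_affine_preimage: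
  fixes g :: "real \<Rightarrow> complex"
  assumes affine: "\<And>t. g t = g 0 + of_real t * (g 1 - g 0)" and "g 1 \<noteq> g 0"
  shows "countable {t. g t \<in> \<int>}"
proof -
  have "{t. g t \<in> \<int>} \<subseteq> (\<lambda>z. Re ((z - g 0) / (g 1 - g 0))) ` \<int>"
  proof
    fix t assume "t \<in> {t. g t \<in> \<int>}"
    then have "g t \<in> \<int>" by simp
    moreover have "t = Re ((g t - g 0) / (g 1 - g 0))"
      using \<open>g 1 \<noteq> g 0\<close> by (subst affine) simp
    ultimately show "t \<in> (\<lambda>z. Re ((z - g 0) / (g 1 - g 0))) ` \<int>" by (rule rev_image_eqI)
  qed
  moreover have "countable (\<int> :: complex set)" unfolding Ints_def by simp
  ultimately show ?thesis by (blast intro: countable_subset countable_image)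
qed

lemma zero_if_zero_off_countable:
  fixes g :: "real \<Rightarrow> complex"
  assumes "isCont g 0" and "eventually P (at 0)" and "countable B"
    and zero: "\<And>t. P t \<Longrightarrow> t \<notin> B \<Longrightarrow> g t = 0"
  shows "g 0 = 0"
proof (rule ccontr)
  assume "g 0 \<noteq> 0"
  have "(g \<longlongrightarrow> g 0) (at 0)" using assms(1) by (simp add: isCont_def)
  then have "eventually (\<lambda>t. g t \<noteq> 0) (at 0)" using \<open>g 0 \<noteq> 0\<close> by (rule tendsto_imp_eventually_ne)
  with assms(2) have "eventually (\<lambda>t. P t \<and> g t \<noteq> 0) (at 0)" by (rule eventually_conj)
  then obtain d :: real where "d > 0" and d: "\<And>t. t \<noteq> 0 \<Longrightarrow> dist t 0 < d \<Longrightarrow> P t \<and> g t \<noteq> 0"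
    unfolding eventually_at by auto
  have "{0<..<d} \<subseteq> B"
  proof
    fix t assume "t \<in> {0<..<d}"
    then have "P t \<and> g t \<noteq> 0" using d[of t] by auto
    then show "t \<in> B" using zero by blast
  qed
  moreover have "uncountable {0<..<d}" using \<open>d > 0\<close> by (simp add: uncountable_open_interval)
  ultimately show False using \<open>countable B\<close> countable_subset by blast
qed

text \<open>The direction \<open>(1, 3, 5, 11)\<close> is chosen so that none of the linear forms that
  \<open>generic_parameters\<close> requires to be non-integral is constant along the line.\<close>

lemma countable_non_generic_on_line:
  fixes f a1 d1 d2 :: complex
  shows "countable {t::real. \<not> generic_parameters (f + of_real t) (a1 + 3 * of_real t)
                                  (d1 + 5 * of_real t) (d2 + 11 * of_real t)}"
proof -
  define F A D1 D2 where "F = (\<lambda>t::real. f + of_real t)" and "A = (\<lambda>t::real. a1 + 3 * of_real t)"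
    and "D1 = (\<lambda>t::real. d1 + 5 * of_real t)" and "D2 = (\<lambda>t::real. d2 + 11 * of_real t)"
  define L where "L = [\<lambda>t. F t - 1, \<lambda>t. F t - 1 - A t, \<lambda>t. F t - 1 - D1 t,
    \<lambda>t. F t - 1 - D2 t, \<lambda>t. A t + D1 t + D2 t - (F t - 1), \<lambda>t. F t - 1 - A t - D1 t - D2 t,
    \<lambda>t. 2 * (F t - 1) - A t - D1 t - D2 t, A, D1, D2, \<lambda>t. D1 t - A t, \<lambda>t. F t - A t - D1 t,
    \<lambda>t. F t - A t - D2 t, \<lambda>t. F t - D1 t - D2 t]"
  have "{t. \<not> generic_parameters (F t) (A t) (D1 t) (D2 t)}
      \<subseteq> {t. (F t - 1) / 2 \<in> \<int>} \<union> (\<Union>g\<in>set L. {t. g t \<in> \<int>})"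
    unfolding generic_parameters_def dougall_generic_def L_def by auto
  moreover have "countable {t. (F t - 1) / 2 \<in> \<int>}"
    unfolding F_def by (rule countable_Ints_affine_preimage) (simp_all add: field_simps)
  moreover have "countable (\<Union>g\<in>set L. {t. g t \<in> \<int>})"
  proof (rule countable_UN[OF countable_finite[OF finite_set]])
    have "\<forall>g\<in>set L. countable {t. g t \<in> \<int>}"
      unfolding L_def list.set ball_simps simp_thms
      by (intro conjI; rule countable_Ints_affine_preimage; simp add: F_def A_def D1_def D2_def algebra_simps)
    then show "countable {t. g t \<in> \<int>}" if "g \<in> set L" for g using that by blast
  qed
  ultimately have "countable {t. \<not> generic_parameters (F t) (A t) (D1 t) (D2 t)}"
    by (meson countable_Un countable_subset)
  then show ?thesis unfolding F_def A_def D1_def D2_def .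
qed

lemma isCont_pochhammer_compose [continuous_intros]:
  "isCont g x \<Longrightarrow> isCont (\<lambda>t. pochhammer (g t) n) x"
  for g :: "'a :: t2_space \<Rightarrow> 'b :: real_normed_field"
  by (rule isCont_o2[OF _ isCont_pochhammer])

definition h_denominator :: "complex \<Rightarrow> complex \<Rightarrow> complex \<Rightarrow> complex \<Rightarrow> nat \<Rightarrow> complex" where
  "h_denominator f a1 d1 d2 N = (f/2 + 1/2) * (f/2 - 3/2) - a1 * (2*f - 2 - d1 - d2 - a1 + of_nat N)"

definition h_value :: "complex \<Rightarrow> complex \<Rightarrow> complex \<Rightarrow> complex \<Rightarrow> nat \<Rightarrow> complex" where
  "h_value f a1 d1 d2 N = (f/2 + 1/2) * (f - 1 - d1 - d2 + of_nat N) * (3/2 - f/2) / h_denominator f a1 d1 d2 N"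

definition k_denominator :: "complex \<Rightarrow> complex \<Rightarrow> complex \<Rightarrow> complex \<Rightarrow> nat \<Rightarrow> complex" where
  "k_denominator f a1 d1 d2 N = d1 * d2 - h_value f a1 d1 d2 N * (1 + d1 + d2 + a1 - f)"

definition k_value :: "complex \<Rightarrow> complex \<Rightarrow> complex \<Rightarrow> complex \<Rightarrow> nat \<Rightarrow> complex" where
  "k_value f a1 d1 d2 N =
     h_value f a1 d1 d2 N * (1 + d1 + a1 - f) * (1 + d2 + a1 - f) / k_denominator f a1 d1 d2 N"

definition hypergeom_sum :: "complex \<Rightarrow> complex \<Rightarrow> complex \<Rightarrow> complex \<Rightarrow> nat \<Rightarrow> complex" where
  "hypergeom_sum f a1 d1 d2 N =
     (\<Sum>n<Suc N. hypergeom_term [f - 1, f/2 + 3/2, a1, d1, d2, 2*f - 2 - d1 - d2 - a1 + of_nat N, - of_nat N]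
                   [f/2 - 3/2, f - a1, f - d1, f - d2, 2 + a1 + d1 + d2 - f - of_nat N, f + of_nat N] n)"

definition closed_form :: "complex \<Rightarrow> complex \<Rightarrow> complex \<Rightarrow> complex \<Rightarrow> nat \<Rightarrow> complex" where
  "closed_form f a1 d1 d2 N = closed_form_prefactor f a1 d1 d2 N
     * (pochhammer (k_value f a1 d1 d2 N + 1) N / pochhammer (k_value f a1 d1 d2 N) N)"

lemma hypergeom_sum_eq_closed_form:
  fixes f a1 d1 d2 :: complex and N :: nat
  assumes lower: "\<forall>b \<in> set [f/2 - 3/2, f - a1, f - d1, f - d2, 2 + a1 + d1 + d2 - f - of_nat N, f + of_nat N].
                    b \<notin> \<int>\<^sub>\<le>\<^sub>0"
    and hden: "h_denominator f a1 d1 d2 N \<noteq> 0" and kden: "k_denominator f a1 d1 d2 N \<noteq> 0"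
    and k: "k_value f a1 d1 d2 N \<noteq> 0" "pochhammer (k_value f a1 d1 d2 N) N \<noteq> 0"
    and prefactor: "pochhammer (f - d1) N * pochhammer (f - d2) N * pochhammer (f - a1) N
                      * pochhammer (f - a1 - d1 - d2 - 1) N \<noteq> 0"
  shows "hypergeom_sum f a1 d1 d2 N = closed_form f a1 d1 d2 N"
proof -
  define F A D1 D2 where "F = (\<lambda>t::real. f + of_real t)" and "A = (\<lambda>t::real. a1 + 3 * of_real t)"
    and "D1 = (\<lambda>t::real. d1 + 5 * of_real t)" and "D2 = (\<lambda>t::real. d2 + 11 * of_real t)"
  define P where "P t \<longleftrightarrow> h_denominator (F t) (A t) (D1 t) (D2 t) N \<noteq> 0
    \<and> k_denominator (F t) (A t) (D1 t) (D2 t) N \<noteq> 0 \<and> k_value (F t) (A t) (D1 t) (D2 t) N \<noteq> 0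
    \<and> pochhammer (k_value (F t) (A t) (D1 t) (D2 t) N) N \<noteq> 0" for t
  have at_0: "F 0 = f" "A 0 = a1" "D1 0 = d1" "D2 0 = d2"
    unfolding F_def A_def D1_def D2_def by simp_all
  have cont_line: "isCont F 0" "isCont A 0" "isCont D1 0" "isCont D2 0"
    unfolding F_def A_def D1_def D2_def by (intro continuous_intros)+
  have cont_hden: "isCont (\<lambda>t. h_denominator (F t) (A t) (D1 t) (D2 t) N) 0"
    unfolding h_denominator_def by (intro continuous_intros cont_line) simp_all
  have cont_h: "isCont (\<lambda>t. h_value (F t) (A t) (D1 t) (D2 t) N) 0"
    unfolding h_value_def using hden by (intro continuous_intros cont_line cont_hden) (simp_all add: at_0)
  have cont_kden: "isCont (\<lambda>t. k_denominator (F t) (A t) (D1 t) (D2 t) N) 0"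
    unfolding k_denominator_def by (intro continuous_intros cont_line cont_h)
  have cont_k: "isCont (\<lambda>t. k_value (F t) (A t) (D1 t) (D2 t) N) 0"
    unfolding k_value_def using kden by (intro continuous_intros cont_line cont_h cont_kden) (simp_all add: at_0)
  have "isCont (\<lambda>t. hypergeom_sum (F t) (A t) (D1 t) (D2 t) N) 0"
  proof -
    have "pochhammer b n \<noteq> 0" if "b \<in> set [f/2 - 3/2, f - a1, f - d1, f - d2,
        2 + a1 + d1 + d2 - f - of_nat N, f + of_nat N]" for b n
      using lower that pochhammer_eq_0_imp_nonpos_Int by blast
    then show ?thesis
      unfolding hypergeom_sum_def hypergeom_term_def list.map prod_list.Cons prod_list.Nil
      by (intro continuous_intros cont_line) (auto simp: at_0)
  qed
  moreover have "isCont (\<lambda>t. closed_form (F t) (A t) (D1 t) (D2 t) N) 0"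
    unfolding closed_form_def closed_form_prefactor_def using prefactor k
    by (intro continuous_intros cont_line cont_k) (simp_all add: at_0)
  ultimately have "isCont (\<lambda>t. hypergeom_sum (F t) (A t) (D1 t) (D2 t) N
                             - closed_form (F t) (A t) (D1 t) (D2 t) N) 0"
    by (rule continuous_intros)
  moreover have "eventually P (at 0)"
  proof -
    have ev: "eventually (\<lambda>t. g t \<noteq> 0) (at 0)" if "isCont g 0" "g 0 \<noteq> 0" for g :: "real \<Rightarrow> complex"
      using that unfolding isCont_def by (rule tendsto_imp_eventually_ne)
    have "isCont (\<lambda>t. pochhammer (k_value (F t) (A t) (D1 t) (D2 t) N) N) 0"
      by (intro continuous_intros cont_k)
    then show ?thesis
      unfolding P_def using hden kden k cont_hden cont_kden cont_k
      by (intro eventually_conj ev) (simp_all add: at_0)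
  qed
  moreover have "countable {t. \<not> generic_parameters (F t) (A t) (D1 t) (D2 t)}"
    using countable_non_generic_on_line[of f a1 d1 d2] by (simp add: F_def A_def D1_def D2_def)
  moreover have "hypergeom_sum (F t) (A t) (D1 t) (D2 t) N - closed_form (F t) (A t) (D1 t) (D2 t) N = 0"
    if "P t" and "t \<notin> {t. \<not> generic_parameters (F t) (A t) (D1 t) (D2 t)}" for t
  proof -
    have "generic_parameters (F t) (A t) (D1 t) (D2 t)" using that(2) by simp
    then have "hypergeom_sum (F t) (A t) (D1 t) (D2 t) N = closed_form (F t) (A t) (D1 t) (D2 t) N"
      unfolding hypergeom_sum_def closed_form_def
      by (rule hypergeom_sum_generic[where h = "h_value (F t) (A t) (D1 t) (D2 t) N"])
        (use that(1) in \<open>simp_all add: P_def h_value_def k_value_def h_denominator_def k_denominator_def\<close>)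
    then show ?thesis by simp
  qed
  ultimately have "hypergeom_sum (F 0) (A 0) (D1 0) (D2 0) N - closed_form (F 0) (A 0) (D1 0) (D2 0) N = 0"
    by (rule zero_if_zero_off_countable)
  then show ?thesis unfolding at_0 by simp
qed

theorem mainTheorem11:
  fixes N :: nat and f a1 d1 d2 h k :: complex
  assumes lower: "\<forall>b \<in> set [f/2 - 3/2, f - a1, f - d1, f - d2, 2 + a1 + d1 + d2 - f - of_nat N, f + of_nat N].
                    b \<notin> \<int>\<^sub>\<le>\<^sub>0"
    and hden: "(f/2 + 1/2) * (f/2 - 3/2) - a1 * (2*f - 2 - d1 - d2 - a1 + of_nat N) \<noteq> 0"
    and h_def: "h = (f/2 + 1/2) * (f - 1 - d1 - d2 + of_nat N) * (3/2 - f/2) /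
                  ((f/2 + 1/2) * (f/2 - 3/2) - a1 * (2*f - 2 - d1 - d2 - a1 + of_nat N))"
    and kden: "d1 * d2 - h * (1 + d1 + d2 + a1 - f) \<noteq> 0"
    and k_def: "k = h * (1 + d1 + a1 - f) * (1 + d2 + a1 - f) / (d1 * d2 - h * (1 + d1 + d2 + a1 - f))"
    and rhsden: "pochhammer (f - d1) N * pochhammer (f - d2) N * pochhammer (f - a1) N
                   * pochhammer (f - a1 - d1 - d2 - 1) N * pochhammer k N \<noteq> 0"
  shows "hypergeom [f - 1, f/2 + 3/2, a1, d1, d2, 2*f - 2 - d1 - d2 - a1 + of_nat N, - of_nat N]
                   [f/2 - 3/2, f - a1, f - d1, f - d2, 2 + a1 + d1 + d2 - f - of_nat N, f + of_nat N] 1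
       = pochhammer f N * pochhammer (f - d1 - d2) N * pochhammer (f - a1 - d1 - 1) N
           * pochhammer (f - a1 - d2 - 1) N
         / (pochhammer (f - d1) N * pochhammer (f - d2) N * pochhammer (f - a1) N
           * pochhammer (f - a1 - d1 - d2 - 1) N)
         * (pochhammer (k + 1) N / pochhammer k N)"
proof -
  have h: "h_value f a1 d1 d2 N = h" unfolding h_value_def h_denominator_def h_def ..
  have k: "k_value f a1 d1 d2 N = k" unfolding k_value_def k_denominator_def h k_def ..
  have "hypergeom [f - 1, f/2 + 3/2, a1, d1, d2, 2*f - 2 - d1 - d2 - a1 + of_nat N, - of_nat N]
                   [f/2 - 3/2, f - a1, f - d1, f - d2, 2 + a1 + d1 + d2 - f - of_nat N, f + of_nat N] 1
      = hypergeom_sum f a1 d1 d2 N"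
    unfolding hypergeom_sum_def by (rule hypergeom_terminating) simp
  also have "\<dots> = closed_form f a1 d1 d2 N"
  proof (cases "N = 0")
    case True
    then show ?thesis
      by (simp add: hypergeom_sum_def hypergeom_term_def closed_form_def closed_form_prefactor_def)
  next
    case False
    have "pochhammer k N \<noteq> 0" using rhsden by simp
    with False have "k \<noteq> 0" by (auto simp: pochhammer_0_left)
    with lower hden kden rhsden \<open>pochhammer k N \<noteq> 0\<close> show ?thesis
      by (intro hypergeom_sum_eq_closed_form) (simp_all add: h k h_denominator_def k_denominator_def)
  qed
  also have "\<dots> = pochhammer f N * pochhammer (f - d1 - d2) N * pochhammer (f - a1 - d1 - 1) N
           * pochhammer (f - a1 - d2 - 1) N
         / (pochhammer (f - d1) N * pochhammer (f - d2) N * pochhammer (f - a1) N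
           * pochhammer (f - a1 - d1 - d2 - 1) N)
         * (pochhammer (k + 1) N / pochhammer k N)"
    unfolding closed_form_def closed_form_prefactor_def k ..
  finally show ?thesis .
qed

end
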